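(* Let $\underline{P}$ be a lower prevision that is 2-coherent wherever it is defined (its domain containing the gambles below), with conjugate $\overline{P}$. Let $X$ be a gamble and $0<s<t$. Then (a) $[\underline{P}(|X|^s)]^{1/s}\le[\overline{P}(|X|^s)]^{1/s}\le[\overline{P}(|X|^t)]^{1/t}$; (b) if $X\ge 0$, then $[\underline{P}(X^s)]^{1/s}\le[\underline{P}(X^t)]^{1/t}$.
   Context: $\Pi$ is a partition of the sure event into pairwise disjoint non-impossible events; a gamble is a bounded map $X:\Pi\to\mathbb{R}$, and $|X|^s$, $X^s$ are defined pointwise. A lower prevision $\underline{P}:\mathcal{D}\to\mathbb{R}$ is 2-coherent iff for all $X_0,X_1\in\mathcal{D}$, $s_1\ge 0$, $s_0\in\mathbb{R}$, $\sup[s_1(X_1-\underline{P}(X_1))-s_0(X_0-\underline{P}(X_0))]\ge 0$; its conjugate is $\overline{P}(Y)=-\underline{P}(-Y)$. *)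

theory Defs
  imports Complex_Main
begin

text \<open>The partition \<Pi> is modelled by a type 'w (types are nonempty).
  A gamble is a bounded real function on 'w.\<close>

definition gamble :: "('w \<Rightarrow> real) \<Rightarrow> bool" where
  "gamble X \<longleftrightarrow> bdd_above (range (\<lambda>w. \<bar>X w\<bar>))"

definition two_coherent :: "('w \<Rightarrow> real) set \<Rightarrow> (('w \<Rightarrow> real) \<Rightarrow> real) \<Rightarrow> bool" where
  "two_coherent D LP \<longleftrightarrow>
     (\<forall>X0\<in>D. \<forall>X1\<in>D. \<forall>s1::real. \<forall>s0::real. s1 \<ge> 0 \<longrightarrow>
        (SUP w. s1 * (X1 w - LP X1) - s0 * (X0 w - LP X0)) \<ge> 0)"

definition conj_upper :: "(('w \<Rightarrow> real) \<Rightarrow> real) \<Rightarrow> ('w \<Rightarrow> real) \<Rightarrow> real" where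
  "conj_upper LP Y = - LP (\<lambda>w. - Y w)"

end

theory Submission
  imports Defs "HOL-Analysis.Convex"
begin

text \<open>For \<open>r > 1\<close> the map \<open>x \<mapsto> x\<^sup>r\<close> lies above its tangent at every \<open>u \<ge> 0\<close>, and that tangent
  has nonnegative slope. A single instance of 2-coherence shows that lower and upper previsions
  respect such tangent bounds, which yields the Jensen-type inequalities
  \<open>\<underline>P(W)\<^sup>r \<le> \<underline>P(W\<^sup>r)\<close> and \<open>\<overline>P(W)\<^sup>r \<le> \<overline>P(W\<^sup>r)\<close> for \<open>W \<ge> 0\<close>. Taking \<open>W = |X|\<^sup>s\<close>, \<open>r = t/s\<close> and
  extracting \<open>t\<close>-th roots gives the theorem.\<close>

lemma powr_above_tangent:
  fixes u w r :: real
  assumes "0 \<le> u" "0 \<le> w" "1 < r"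
  shows "r * u powr (r - 1) * (w - u) \<le> w powr r - u powr r"
proof -
  define q where "q = r / (r - 1)"
  have "1 < q" "1 / r + 1 / q = 1"
    using assms unfolding q_def by (simp_all add: field_simps)
  then have "w * u powr (r - 1) \<le> w powr r / r + (u powr (r - 1)) powr q / q"
    using assms by (intro Youngs_inequality) auto
  also have "(u powr (r - 1)) powr q = u powr r"
    using assms unfolding q_def by (simp add: powr_powr)
  finally have "r * (w * u powr (r - 1)) \<le> w powr r + (r - 1) * u powr r"
    using assms unfolding q_def by (simp add: field_simps)
  moreover have "u powr r = u powr (r - 1) * u"
    using assms by (cases "u = 0") (simp_all add: powr_diff)
  ultimately show ?thesis
    by (simp add: algebra_simps)
qed

lemma powr_inverse_le_of_powr_le:
  fixes a b s t :: real
  assumes "0 \<le> a" "0 < s" "0 < t" "a powr (t / s) \<le> b"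
  shows "a powr (1 / s) \<le> b powr (1 / t)"
proof -
  have "a powr (1 / s) = (a powr (t / s)) powr (1 / t)"
    using assms by (simp add: powr_powr)
  also have "\<dots> \<le> b powr (1 / t)"
    using assms by (intro powr_mono2) auto
  finally show ?thesis .
qed

lemma two_coherentD_bound:
  assumes "two_coherent D LP" "X0 \<in> D" "X1 \<in> D" "0 \<le> s1"
    and "\<And>w. s1 * (X1 w - LP X1) - s0 * (X0 w - LP X0) \<le> c"
  shows "0 \<le> c"
proof -
  have "0 \<le> (SUP w. s1 * (X1 w - LP X1) - s0 * (X0 w - LP X0))"
    using assms unfolding two_coherent_def by blast
  also have "\<dots> \<le> c"
    using assms(5) by (rule cSUP_least[OF UNIV_not_empty])
  finally show ?thesis .
qed

lemma two_coherent_lower_le_upper: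
  assumes "two_coherent D LP" "Y \<in> D" "(\<lambda>w. - Y w) \<in> D"
  shows "LP Y \<le> conj_upper LP Y"
  using two_coherentD_bound[OF assms(1,3,2), of 1 "-1" "- LP Y - LP (\<lambda>w. - Y w)"]
  by (simp add: conj_upper_def)

lemma two_coherent_lower_above_tangent:
  assumes "two_coherent D LP" "W \<in> D" "V \<in> D" "0 \<le> c"
    and "\<And>w. c * (W w - LP W) \<le> V w - a"
  shows "a \<le> LP V"
  using two_coherentD_bound[OF assms(1,3,2,4), of 1 "LP V - a"] assms(5)
  by (simp add: algebra_simps)

text \<open>Unlike the lower version, no sign condition on the slope \<open>c\<close> is needed: the gamble \<open>-W\<close>
  enters the coherence condition with the unrestricted coefficient \<open>s\<^sub>0\<close>.\<close>

lemma two_coherent_upper_above_tangent: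
  assumes "two_coherent D LP" "(\<lambda>w. - W w) \<in> D" "(\<lambda>w. - V w) \<in> D"
    and "\<And>w. c * (W w - conj_upper LP W) \<le> V w - a"
  shows "a \<le> conj_upper LP V"
  using two_coherentD_bound[OF assms(1,2,3), of 1 c "conj_upper LP V - a"] assms(4)
  by (simp add: conj_upper_def algebra_simps)

lemma two_coherent_lower_nonneg:
  assumes "two_coherent D LP" "W \<in> D" "\<And>w. 0 \<le> W w"
  shows "0 \<le> LP W"
  by (rule two_coherent_lower_above_tangent[OF assms(1,2,2), where c = 0]) (simp_all add: assms(3))

lemma two_coherent_upper_nonneg:
  assumes "two_coherent D LP" "(\<lambda>w. - W w) \<in> D" "\<And>w. 0 \<le> W w"
  shows "0 \<le> conj_upper LP W"
  by (rule two_coherent_upper_above_tangent[OF assms(1,2,2), where c = 0]) (simp add: assms(3))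

lemma two_coherent_lower_powr_le:
  assumes coh: "two_coherent D LP" and W: "W \<in> D" and "(\<lambda>w. W w powr r) \<in> D"
    and W_nonneg: "\<And>w. 0 \<le> W w" and "1 < r"
  shows "LP W powr r \<le> LP (\<lambda>w. W w powr r)"
proof -
  have "0 \<le> LP W"
    using coh W W_nonneg by (rule two_coherent_lower_nonneg)
  then show ?thesis
    using assms powr_above_tangent[OF \<open>0 \<le> LP W\<close> W_nonneg \<open>1 < r\<close>]
    by (intro two_coherent_lower_above_tangent[OF coh, of W "\<lambda>w. W w powr r" "r * LP W powr (r - 1)"])
      auto
qed

lemma two_coherent_upper_powr_le:
  assumes coh: "two_coherent D LP" and W: "(\<lambda>w. - W w) \<in> D"
    and "(\<lambda>w. - (W w powr r)) \<in> D" and W_nonneg: "\<And>w. 0 \<le> W w" and "1 < r"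
  shows "conj_upper LP W powr r \<le> conj_upper LP (\<lambda>w. W w powr r)"
proof -
  have "0 \<le> conj_upper LP W"
    using coh W W_nonneg by (rule two_coherent_upper_nonneg)
  then show ?thesis
    using assms powr_above_tangent[OF \<open>0 \<le> conj_upper LP W\<close> W_nonneg \<open>1 < r\<close>]
    by (intro two_coherent_upper_above_tangent[OF coh,
          of W "\<lambda>w. W w powr r" "r * conj_upper LP W powr (r - 1)"]) auto
qed

theorem proposition1:
  fixes D :: "('w \<Rightarrow> real) set" and LP :: "('w \<Rightarrow> real) \<Rightarrow> real"
    and X :: "'w \<Rightarrow> real" and s t :: real
  assumes D_gambles: "\<forall>Y\<in>D. gamble Y"
    and coh: "two_coherent D LP"
    and X_gamble: "gamble X"
    and st: "0 < s" "s < t"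
    and dom_s: "(\<lambda>w. \<bar>X w\<bar> powr s) \<in> D" "(\<lambda>w. - (\<bar>X w\<bar> powr s)) \<in> D"
    and dom_t: "(\<lambda>w. \<bar>X w\<bar> powr t) \<in> D" "(\<lambda>w. - (\<bar>X w\<bar> powr t)) \<in> D"
  shows "LP (\<lambda>w. \<bar>X w\<bar> powr s) powr (1 / s)
           \<le> conj_upper LP (\<lambda>w. \<bar>X w\<bar> powr s) powr (1 / s)
         \<and> conj_upper LP (\<lambda>w. \<bar>X w\<bar> powr s) powr (1 / s)
           \<le> conj_upper LP (\<lambda>w. \<bar>X w\<bar> powr t) powr (1 / t)
         \<and> ((\<forall>w. X w \<ge> 0) \<longrightarrow>
              LP (\<lambda>w. X w powr s) powr (1 / s) \<le> LP (\<lambda>w. X w powr t) powr (1 / t))"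
proof -
  define W where "W = (\<lambda>w. \<bar>X w\<bar> powr s)"
  define r where "r = t / s"
  have r: "1 < r" and W_nonneg: "\<And>w. 0 \<le> W w"
    using st by (simp_all add: W_def r_def)
  have W_powr: "\<And>w. W w powr r = \<bar>X w\<bar> powr t"
    using st by (simp add: W_def r_def powr_powr)
  have dom_W: "W \<in> D" "(\<lambda>w. - W w) \<in> D" "(\<lambda>w. W w powr r) \<in> D" "(\<lambda>w. - (W w powr r)) \<in> D"
    using dom_s dom_t by (simp_all add: W_powr) (simp_all add: W_def)
  have "0 \<le> LP W" "LP W \<le> conj_upper LP W"
    using coh dom_W(1,2) W_nonneg
    by (simp_all add: two_coherent_lower_nonneg two_coherent_lower_le_upper)
  then have lower_le_upper_root: "LP W powr (1 / s) \<le> conj_upper LP W powr (1 / s)"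
    using st by (simp add: powr_mono2)
  have "conj_upper LP W powr r \<le> conj_upper LP (\<lambda>w. \<bar>X w\<bar> powr t)"
    using two_coherent_upper_powr_le[OF coh dom_W(2,4) W_nonneg r] by (simp only: W_powr)
  then have upper_root_mono:
      "conj_upper LP W powr (1 / s) \<le> conj_upper LP (\<lambda>w. \<bar>X w\<bar> powr t) powr (1 / t)"
    using st \<open>0 \<le> LP W\<close> \<open>LP W \<le> conj_upper LP W\<close>
    by (intro powr_inverse_le_of_powr_le) (simp_all add: r_def)
  have "LP W powr r \<le> LP (\<lambda>w. \<bar>X w\<bar> powr t)"
    using two_coherent_lower_powr_le[OF coh dom_W(1,3) W_nonneg r] by (simp only: W_powr)
  then have lower_root_mono: "LP W powr (1 / s) \<le> LP (\<lambda>w. \<bar>X w\<bar> powr t) powr (1 / t)"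
    using st \<open>0 \<le> LP W\<close> by (intro powr_inverse_le_of_powr_le) (simp_all add: r_def)
  have lower_root_mono_nonneg: "LP (\<lambda>w. X w powr s) powr (1 / s) \<le> LP (\<lambda>w. X w powr t) powr (1 / t)"
    if "\<forall>w. X w \<ge> 0"
  proof -
    from that have "\<bar>X w\<bar> = X w" for w
      by simp
    with lower_root_mono show ?thesis
      by (simp add: W_def)
  qed
  show ?thesis
    using lower_le_upper_root upper_root_mono lower_root_mono_nonneg by (simp add: W_def)
qed

end
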